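(* For each $0\ne a\in\mathbb{R}$, the translation operator $T_a:C^\infty(\mathbb{R},\mathbb{R})\to C^\infty(\mathbb{R},\mathbb{R})$, $T_a(f)(x)=f(x+a)$, is weakly mixing but does not support a hypercyclic algebra.
   Context: $C^\infty(\mathbb{R},\mathbb{R})$ is the Fréchet algebra (pointwise operations) of real-valued smooth functions on $\mathbb{R}$ with seminorms $p_k(f)=\max_{0\le j\le k}\max_{t\in[-k,k]}|f^{(j)}(t)|$. An operator $T$ is weakly mixing if $T\oplus T$ is topologically transitive (equivalently hypercyclic) on $X\times X$. $T$ supports a hypercyclic algebra if there is a subalgebra $A\ne\{0\}$ all of whose nonzero elements $f$ have dense orbit $\{T^nf:n\ge0\}$. *)

theory Defs
  imports "HOL-Analysis.Analysis"
begin

definition smooth :: "(real \<Rightarrow> real) \<Rightarrow> bool" where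
  "smooth f \<longleftrightarrow> (\<forall>k x. ((deriv ^^ k) f) differentiable (at x))"

definition Cinf :: "(real \<Rightarrow> real) set" where
  "Cinf = {f. smooth f}"

definition seminorm_p :: "nat \<Rightarrow> (real \<Rightarrow> real) \<Rightarrow> real" where
  "seminorm_p k f = (MAX j\<in>{0..k}. (SUP t\<in>{-real k..real k}. \<bar>(deriv ^^ j) f t\<bar>))"

definition Cinf_open :: "(real \<Rightarrow> real) set \<Rightarrow> bool" where
  "Cinf_open U \<longleftrightarrow> U \<subseteq> Cinf \<and>
     (\<forall>f\<in>U. \<exists>k \<epsilon>. \<epsilon> > 0 \<and> {g\<in>Cinf. seminorm_p k (\<lambda>x. g x - f x) < \<epsilon>} \<subseteq> U)"

definition transl :: "real \<Rightarrow> (real \<Rightarrow> real) \<Rightarrow> (real \<Rightarrow> real)" where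
  "transl a f = (\<lambda>x. f (x + a))"

definition hypercyclic_vector :: "((real \<Rightarrow> real) \<Rightarrow> (real \<Rightarrow> real)) \<Rightarrow> (real \<Rightarrow> real) \<Rightarrow> bool" where
  "hypercyclic_vector T f \<longleftrightarrow> f \<in> Cinf \<and>
     (\<forall>V. Cinf_open V \<and> V \<noteq> {} \<longrightarrow> (\<exists>n. (T ^^ n) f \<in> V))"

text \<open>Weak mixing: T \<oplus> T topologically transitive on X \<times> X (product opens contain
  products of opens, so it suffices to test on products of nonempty open sets).\<close>
definition weakly_mixing :: "((real \<Rightarrow> real) \<Rightarrow> (real \<Rightarrow> real)) \<Rightarrow> bool" where
  "weakly_mixing T \<longleftrightarrow>
     (\<forall>U1 U2 V1 V2. Cinf_open U1 \<and> Cinf_open U2 \<and> Cinf_open V1 \<and> Cinf_open V2 \<and>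
        U1 \<noteq> {} \<and> U2 \<noteq> {} \<and> V1 \<noteq> {} \<and> V2 \<noteq> {} \<longrightarrow>
        (\<exists>n. (T ^^ n) ` U1 \<inter> V1 \<noteq> {} \<and> (T ^^ n) ` U2 \<inter> V2 \<noteq> {}))"

definition Cinf_subalgebra :: "(real \<Rightarrow> real) set \<Rightarrow> bool" where
  "Cinf_subalgebra A \<longleftrightarrow> A \<subseteq> Cinf \<and> (\<lambda>x. 0) \<in> A \<and>
     (\<forall>f\<in>A. \<forall>g\<in>A. (\<lambda>x. f x + g x) \<in> A \<and> (\<lambda>x. f x * g x) \<in> A) \<and>
     (\<forall>c. \<forall>f\<in>A. (\<lambda>x. c * f x) \<in> A)"

definition supports_hypercyclic_algebra :: "((real \<Rightarrow> real) \<Rightarrow> (real \<Rightarrow> real)) \<Rightarrow> bool" where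
  "supports_hypercyclic_algebra T \<longleftrightarrow>
     (\<exists>A. Cinf_subalgebra A \<and> A \<noteq> {\<lambda>x. 0} \<and> (\<forall>f\<in>A. f \<noteq> (\<lambda>x. 0) \<longrightarrow> hypercyclic_vector T f))"

end

theory Submission
  imports Defs "HOL-Computational_Algebra.Polynomial"
begin

text \<open>
  Weak mixing: a basic neighbourhood of \<open>f\<close> only constrains finitely many derivatives of \<open>f\<close>
  on some interval \<open>[-K, K]\<close>. For \<open>n\<close> with \<open>n\<bar>a\<bar>\<close> large, a smooth step function glues \<open>f\<close> near
  \<open>[-K, K]\<close> to a translate of \<open>g\<close> near \<open>n a + [-K, K]\<close>; this gives one \<open>h\<close> close to \<open>f\<close> with
  \<open>T\<^sub>a\<^sup>n h\<close> close to \<open>g\<close>, and the same \<open>n\<close> works for any two pairs at once.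

  No hypercyclic algebra: an algebra containing \<open>f \<noteq> 0\<close> contains \<open>f\<^sup>2 \<noteq> 0\<close>, whose translates
  are all nonnegative and so never enter the open set \<open>{g. g 0 < -1}\<close>.
\<close>

definition differentiable_upto :: "nat \<Rightarrow> (real \<Rightarrow> real) \<Rightarrow> bool" where
  "differentiable_upto k f \<longleftrightarrow> (\<forall>j\<le>k. \<forall>x. ((deriv ^^ j) f) differentiable (at x))"

lemma Cinf_iff_differentiable_upto: "f \<in> Cinf \<longleftrightarrow> (\<forall>k. differentiable_upto k f)"
  unfolding Cinf_def smooth_def differentiable_upto_def by blast

lemma differentiable_upto_0: "differentiable_upto 0 f \<longleftrightarrow> (\<forall>x. f differentiable (at x))"
  by (simp add: differentiable_upto_def)

lemma differentiable_upto_Suc: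
  "differentiable_upto (Suc k) f \<longleftrightarrow>
     (\<forall>x. f differentiable (at x)) \<and> differentiable_upto k (deriv f)"
proof -
  have "differentiable_upto (Suc k) f \<longleftrightarrow>
      (\<forall>x. f differentiable (at x)) \<and> (\<forall>j\<le>k. \<forall>x. (deriv ^^ Suc j) f differentiable (at x))"
    unfolding differentiable_upto_def by (metis Suc_le_mono funpow_0 not0_implies_Suc zero_le)
  then show ?thesis
    by (simp add: differentiable_upto_def funpow_Suc_right del: funpow.simps)
qed

lemma differentiable_upto_Suc_imp: "differentiable_upto (Suc k) f \<Longrightarrow> differentiable_upto k f"
  by (simp add: differentiable_upto_def)

lemma differentiable_upto_const: "differentiable_upto k (\<lambda>x. c)"
proof (induction k arbitrary: c)
  case (Suc k)
  have "deriv (\<lambda>x. c) = (\<lambda>x. 0)" by (rule ext) simp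
  then show ?case using Suc.IH[of 0] by (simp add: differentiable_upto_Suc)
qed (simp add: differentiable_upto_0)

lemma differentiable_upto_add:
  "differentiable_upto k f \<Longrightarrow> differentiable_upto k g \<Longrightarrow> differentiable_upto k (\<lambda>x. f x + g x)"
proof (induction k arbitrary: f g)
  case (Suc k)
  have f: "\<forall>x. f differentiable (at x)" and g: "\<forall>x. g differentiable (at x)"
    using Suc.prems by (auto simp: differentiable_upto_Suc)
  have "deriv (\<lambda>x. f x + g x) = (\<lambda>x. deriv f x + deriv g x)"
    using f g by (intro ext DERIV_imp_deriv derivative_intros)
      (auto simp: DERIV_deriv_iff_real_differentiable)
  moreover have "differentiable_upto k (\<lambda>x. deriv f x + deriv g x)"
    using Suc by (auto simp: differentiable_upto_Suc)
  ultimately show ?case using f g by (simp add: differentiable_upto_Suc)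
qed (simp add: differentiable_upto_0)

lemma differentiable_upto_mult:
  "differentiable_upto k f \<Longrightarrow> differentiable_upto k g \<Longrightarrow> differentiable_upto k (\<lambda>x. f x * g x)"
proof (induction k arbitrary: f g)
  case (Suc k)
  have f: "\<forall>x. f differentiable (at x)" and g: "\<forall>x. g differentiable (at x)"
    using Suc.prems by (auto simp: differentiable_upto_Suc)
  have df: "(f has_real_derivative deriv f x) (at x)" and dg: "(g has_real_derivative deriv g x) (at x)"
    for x using f g by (simp_all add: DERIV_deriv_iff_real_differentiable)
  have "deriv (\<lambda>x. f x * g x) = (\<lambda>x. deriv f x * g x + f x * deriv g x)"
    by (rule ext, rule DERIV_imp_deriv, rule DERIV_cong[OF DERIV_mult'[OF df dg]]) simp
  moreover have "differentiable_upto k (\<lambda>x. deriv f x * g x + f x * deriv g x)"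
    using Suc differentiable_upto_Suc_imp
    by (intro differentiable_upto_add) (auto simp: differentiable_upto_Suc)
  ultimately show ?case using f g by (simp add: differentiable_upto_Suc)
qed (simp add: differentiable_upto_0)

lemma differentiable_upto_cmult: "differentiable_upto k f \<Longrightarrow> differentiable_upto k (\<lambda>x. c * f x)"
  using differentiable_upto_mult[OF differentiable_upto_const] by blast

lemma differentiable_upto_diff:
  "differentiable_upto k f \<Longrightarrow> differentiable_upto k g \<Longrightarrow> differentiable_upto k (\<lambda>x. f x - g x)"
  using differentiable_upto_add[OF _ differentiable_upto_cmult[of k g "-1"], of f] by simp

lemma DERIV_compose_affine:
  assumes "f differentiable (at (s * x + d))"
  shows "((\<lambda>x. f (s * x + d)) has_real_derivative deriv f (s * x + d) * s) (at x)"
  using assms by (intro DERIV_chain2[of f]) (auto intro!: derivative_eq_intros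
      simp: DERIV_deriv_iff_real_differentiable)

lemma differentiable_upto_compose_affine:
  "differentiable_upto k f \<Longrightarrow> differentiable_upto k (\<lambda>x. f (s * x + d))"
proof (induction k arbitrary: f)
  case 0
  then show ?case
    using DERIV_compose_affine[of f s _ d] real_differentiable_def
    by (auto simp: differentiable_upto_0)
next
  case (Suc k)
  then have f: "\<forall>x. f differentiable (at x)" and "differentiable_upto k (deriv f)"
    by (auto simp: differentiable_upto_Suc)
  then have "differentiable_upto k (\<lambda>x. deriv f (s * x + d) * s)"
    using Suc.IH differentiable_upto_cmult[of k _ s] by (auto simp: mult.commute)
  moreover have "deriv (\<lambda>x. f (s * x + d)) = (\<lambda>x. deriv f (s * x + d) * s)"
    using f by (intro ext DERIV_imp_deriv DERIV_compose_affine) auto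
  moreover have "\<forall>x. (\<lambda>x. f (s * x + d)) differentiable (at x)"
    using f DERIV_compose_affine[of f s _ d] real_differentiable_def by blast
  ultimately show ?case
    by (simp add: differentiable_upto_Suc)
qed

lemma differentiable_upto_inverse:
  "differentiable_upto k f \<Longrightarrow> (\<forall>x. f x \<noteq> 0) \<Longrightarrow> differentiable_upto k (\<lambda>x. inverse (f x))"
proof (induction k arbitrary: f)
  case 0
  then show ?case
    by (auto simp: differentiable_upto_0 intro!: derivative_intros)
next
  case (Suc k)
  have f: "\<forall>x. f differentiable (at x)"
    using Suc.prems by (auto simp: differentiable_upto_Suc)
  have D: "((\<lambda>x. inverse (f x)) has_real_derivative
      - (deriv f x * (inverse (f x) * inverse (f x)))) (at x)" for x
    using DERIV_inverse_fun[of f "deriv f x" x] f Suc.prems(2)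
    by (simp add: power2_eq_square DERIV_deriv_iff_real_differentiable)
  then have "deriv (\<lambda>x. inverse (f x)) = (\<lambda>x. - (deriv f x * (inverse (f x) * inverse (f x))))"
    by (intro ext DERIV_imp_deriv)
  moreover have "differentiable_upto k (\<lambda>x. (-1) * (deriv f x * (inverse (f x) * inverse (f x))))"
    using Suc differentiable_upto_Suc_imp
    by (intro differentiable_upto_cmult differentiable_upto_mult) (auto simp: differentiable_upto_Suc)
  ultimately show ?case
    using D by (auto simp: differentiable_upto_Suc real_differentiable_def)
qed

section \<open>A smooth step function\<close>

lemma poly_times_exp_minus_tendsto_0: "((\<lambda>y. poly p y * exp (- y)) \<longlongrightarrow> (0::real)) at_top"
proof -
  have "((\<lambda>y. \<Sum>i\<le>degree p. coeff p i * (y ^ i / exp y)) \<longlongrightarrow> (0::real)) at_top"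
    by (intro tendsto_null_sum tendsto_mult_right_zero tendsto_power_div_exp_0)
  moreover have "(\<Sum>i\<le>degree p. coeff p i * (y ^ i / exp y)) = poly p y * exp (- y)" for y :: real
    by (simp add: poly_altdef sum_distrib_right exp_minus divide_inverse mult.assoc)
  ultimately show ?thesis by simp
qed

text \<open>The derivatives of \<open>x \<mapsto> exp (-1/x)\<close> (extended by \<open>0\<close> for \<open>x \<le> 0\<close>) all have this shape;
  \<open>flat_exp_deriv_poly\<close> computes the polynomial of the next derivative.\<close>

definition flat_exp :: "real poly \<Rightarrow> real \<Rightarrow> real" where
  "flat_exp p x = (if 0 < x then poly p (inverse x) * exp (- inverse x) else 0)"

definition flat_exp_deriv_poly :: "real poly \<Rightarrow> real poly" where
  "flat_exp_deriv_poly p = [:0, 0, 1:] * (p - pderiv p)"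

lemma flat_exp_has_derivative_0: "(flat_exp p has_real_derivative 0) (at 0)"
proof -
  have left: "((\<lambda>h. (flat_exp p (0 + h) - flat_exp p 0) / h) \<longlongrightarrow> 0) (at_left 0)"
    by (rule tendsto_eventually, rule eventually_mono[OF eventually_at_left_real[of "-1"]])
      (auto simp: flat_exp_def)
  have "\<forall>\<^sub>F y in at_top. poly (p * [:0, 1:]) y * exp (- y) =
      (flat_exp p (0 + inverse y) - flat_exp p 0) / inverse y"
    by (rule eventually_mono[OF eventually_gt_at_top[of 0]]) (auto simp: flat_exp_def field_simps)
  then have "((\<lambda>h. (flat_exp p (0 + h) - flat_exp p 0) / h) \<longlongrightarrow> 0) (at_right 0)"
    unfolding filterlim_at_right_to_top
    using tendsto_cong poly_times_exp_minus_tendsto_0 by fastforce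
  with left show ?thesis
    unfolding DERIV_def using filterlim_at_split by blast
qed

lemma flat_exp_has_derivative:
  "(flat_exp p has_real_derivative flat_exp (flat_exp_deriv_poly p) x) (at x)"
proof -
  consider "0 < x" | "x < 0" | "x = 0" by linarith
  then show ?thesis
  proof cases
    case 1
    have "((\<lambda>x. poly p (inverse x) * exp (- inverse x)) has_real_derivative
        poly (pderiv p) (inverse x) * (- inverse (x^2)) * exp (- inverse x)
        + poly p (inverse x) * (exp (- inverse x) * inverse (x^2))) (at x)"
      using 1 by (auto intro!: derivative_eq_intros DERIV_chain2[OF poly_DERIV]
          simp: power2_eq_square)
    then have "((\<lambda>x. poly p (inverse x) * exp (- inverse x)) has_real_derivative
        flat_exp (flat_exp_deriv_poly p) x) (at x)"
      using 1 by (simp add: flat_exp_def flat_exp_deriv_poly_def algebra_simps power2_eq_square)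
    then show ?thesis
      by (rule has_field_derivative_transform_within_open[of _ _ _ "{0<..}"])
        (use 1 in \<open>auto simp: flat_exp_def\<close>)
  next
    case 2
    have "((\<lambda>x. 0) has_real_derivative flat_exp (flat_exp_deriv_poly p) x) (at x)"
      using 2 by (simp add: flat_exp_def)
    then show ?thesis
      by (rule has_field_derivative_transform_within_open[of _ _ _ "{..<0}"])
        (use 2 in \<open>auto simp: flat_exp_def\<close>)
  next
    case 3
    then show ?thesis using flat_exp_has_derivative_0 by (simp add: flat_exp_def)
  qed
qed

lemma differentiable_upto_flat_exp: "differentiable_upto k (flat_exp p)"
proof (induction k arbitrary: p)
  case 0
  then show ?case
    using flat_exp_has_derivative real_differentiable_def differentiable_upto_0 by blast
next
  case (Suc k)
  have "deriv (flat_exp p) = flat_exp (flat_exp_deriv_poly p)"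
    using flat_exp_has_derivative DERIV_imp_deriv by blast
  then show ?case
    using Suc flat_exp_has_derivative real_differentiable_def differentiable_upto_Suc by metis
qed

lemma flat_exp_1: "flat_exp 1 x = (if 0 < x then exp (- inverse x) else 0)"
  by (simp add: flat_exp_def)

definition smooth_step :: "real \<Rightarrow> real" where
  "smooth_step x = flat_exp 1 x * inverse (flat_exp 1 x + flat_exp 1 (1 - x))"

lemma differentiable_upto_smooth_step: "differentiable_upto k smooth_step"
proof -
  have "flat_exp 1 x + flat_exp 1 (1 - x) > 0" for x
    by (cases "0 < x") (simp_all add: flat_exp_1 add_pos_nonneg add_nonneg_pos)
  then have "flat_exp 1 x + flat_exp 1 (1 - x) \<noteq> 0" for x
    by (metis less_irrefl)
  moreover have "differentiable_upto k (\<lambda>x. flat_exp 1 ((-1) * x + 1))"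
    by (rule differentiable_upto_compose_affine[OF differentiable_upto_flat_exp])
  ultimately show ?thesis
    unfolding smooth_step_def[abs_def]
    by (intro differentiable_upto_mult differentiable_upto_inverse differentiable_upto_add
        differentiable_upto_flat_exp) simp_all
qed

lemma smooth_step_eq_0: "x \<le> 0 \<Longrightarrow> smooth_step x = 0"
  by (simp add: smooth_step_def flat_exp_1)

lemma smooth_step_eq_1: "1 \<le> x \<Longrightarrow> smooth_step x = 1"
  by (simp add: smooth_step_def flat_exp_1)

section \<open>Agreement of jets\<close>

definition jets_agree :: "real \<Rightarrow> (real \<Rightarrow> real) \<Rightarrow> (real \<Rightarrow> real) \<Rightarrow> bool" where
  "jets_agree K f g \<longleftrightarrow> (\<forall>j t. \<bar>t\<bar> \<le> K \<longrightarrow> (deriv ^^ j) (\<lambda>x. f x - g x) t = 0)"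

lemma jets_agree_mono: "jets_agree K f g \<Longrightarrow> L \<le> K \<Longrightarrow> jets_agree L f g"
  by (simp add: jets_agree_def)

lemma higher_deriv_eq_0_if_zero_on_open:
  fixes F :: "real \<Rightarrow> real"
  assumes "open S" "t \<in> S" "\<And>x. x \<in> S \<Longrightarrow> F x = 0"
  shows "(deriv ^^ j) F t = 0"
proof -
  have "\<forall>\<^sub>F x in nhds t. F x = 0"
    using eventually_nhds_in_open[OF assms(1,2)] by (rule eventually_mono) (rule assms(3))
  then have "(deriv ^^ j) F t = (deriv ^^ j) (\<lambda>x. 0) t"
    by (rule higher_deriv_cong_ev) (rule refl)
  also have "(deriv ^^ j) (\<lambda>x::real. 0::real) = (\<lambda>x. 0)"
    by (induction j) auto
  finally show ?thesis by simp
qed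

lemma seminorm_p_eq_0_if_jets_agree:
  assumes "jets_agree (real k) f g"
  shows "seminorm_p k (\<lambda>x. f x - g x) = 0"
proof -
  have "(SUP t\<in>{-real k..real k}. \<bar>(deriv ^^ j) (\<lambda>x. f x - g x) t\<bar>) = 0" for j
  proof -
    have "(SUP t\<in>{-real k..real k}. \<bar>(deriv ^^ j) (\<lambda>x. f x - g x) t\<bar>) =
        (SUP t\<in>{-real k..real k}. (0::real))"
      using assms by (intro SUP_cong) (auto simp: jets_agree_def)
    then show ?thesis by simp
  qed
  then show ?thesis by (simp add: seminorm_p_def)
qed

lemma Cinf_open_jets_agree:
  assumes "Cinf_open U" "f \<in> U"
  obtains K where "\<And>h. h \<in> Cinf \<Longrightarrow> jets_agree K h f \<Longrightarrow> h \<in> U"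
proof -
  obtain k \<epsilon> where "\<epsilon> > 0" "{g\<in>Cinf. seminorm_p k (\<lambda>x. g x - f x) < \<epsilon>} \<subseteq> U"
    using assms unfolding Cinf_open_def by blast
  then show ?thesis
    using seminorm_p_eq_0_if_jets_agree by (intro that[of "real k"]) auto
qed

lemma Cinf_open_eval_0_less: "Cinf_open {g\<in>Cinf. g 0 < c}"
  unfolding Cinf_open_def
proof (intro conjI ballI)
  fix g assume g: "g \<in> {g\<in>Cinf. g 0 < c}"
  show "\<exists>k \<epsilon>. \<epsilon> > 0 \<and> {h\<in>Cinf. seminorm_p k (\<lambda>x. h x - g x) < \<epsilon>} \<subseteq> {g\<in>Cinf. g 0 < c}"
    using g by (intro exI[of _ 0] exI[of _ "c - g 0"]) (auto simp: seminorm_p_def)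
qed blast

lemma funpow_transl: "(transl a ^^ n) f = (\<lambda>x. f (x + real n * a))"
  by (induction n) (auto simp: transl_def algebra_simps)

lemma funpow_transl_Cinf: "f \<in> Cinf \<Longrightarrow> (transl a ^^ n) f \<in> Cinf"
  unfolding funpow_transl Cinf_iff_differentiable_upto
  using differentiable_upto_compose_affine[of _ f 1 "real n * a"] by simp

text \<open>With \<open>c = sgn a\<close>, the glued function is \<open>f\<close> where \<open>c x < K + 1\<close> and the translate of \<open>g\<close>
  where \<open>c x \<ge> K + 2\<close>; the room \<open>n\<bar>a\<bar> \<ge> 2K + 3\<close> separates \<open>[-K, K]\<close> from \<open>n a + [-K, K]\<close>.\<close>

lemma transl_glue:
  assumes "a \<noteq> 0" "f \<in> Cinf" "g \<in> Cinf" "2 * K + 3 \<le> real n * \<bar>a\<bar>"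
  obtains h where "h \<in> Cinf" "jets_agree K h f" "jets_agree K ((transl a ^^ n) h) g"
proof
  define c where "c = sgn a"
  have ca: "c * a = \<bar>a\<bar>"
    using assms(1) by (auto simp: c_def sgn_if)
  have c: "c * t \<le> \<bar>t\<bar>" "- c * t \<le> \<bar>t\<bar>" for t
    by (auto simp: c_def sgn_if)
  define h where "h x = f x + smooth_step (c * x + - (K + 1)) * (g (1 * x + - (real n * a)) - f x)"
    for x
  show "h \<in> Cinf"
    using assms(2,3) unfolding h_def[abs_def] Cinf_iff_differentiable_upto
    by (intro allI differentiable_upto_add differentiable_upto_mult differentiable_upto_diff
        differentiable_upto_compose_affine differentiable_upto_smooth_step) auto
  show "jets_agree K h f"
    unfolding jets_agree_def
  proof (intro allI impI)
    fix j t assume "\<bar>t\<bar> \<le> K"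
    then show "(deriv ^^ j) (\<lambda>x. h x - f x) t = 0"
      using c(1)[of t] by (intro higher_deriv_eq_0_if_zero_on_open[of "{x. c * x < K + 1}"])
        (auto intro!: open_Collect_less continuous_intros simp: h_def smooth_step_eq_0)
  qed
  show "jets_agree K ((transl a ^^ n) h) g"
    unfolding jets_agree_def
  proof (intro allI impI)
    fix j t assume "\<bar>t\<bar> \<le> K"
    moreover have "smooth_step (c * (x + real n * a) + - (K + 1)) = 1"
      if "- c * x < real n * \<bar>a\<bar> - (K + 2)" for x
    proof -
      have "c * (x + real n * a) + - (K + 1) = c * x + real n * (c * a) - (K + 1)"
        by (simp add: algebra_simps)
      with that show ?thesis
        unfolding ca by (intro smooth_step_eq_1) linarith
    qed
    ultimately show "(deriv ^^ j) (\<lambda>x. (transl a ^^ n) h x - g x) t = 0"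
      using c(2)[of t] assms(4)
      by (intro higher_deriv_eq_0_if_zero_on_open[of "{x. - c * x < real n * \<bar>a\<bar> - (K + 2)}"])
        (auto intro!: open_Collect_less continuous_intros simp: funpow_transl h_def)
  qed
qed

lemma weakly_mixing_transl:
  assumes "a \<noteq> 0"
  shows "weakly_mixing (transl a)"
  unfolding weakly_mixing_def
proof (intro allI impI)
  fix U1 U2 V1 V2 :: "(real \<Rightarrow> real) set"
  assume H: "Cinf_open U1 \<and> Cinf_open U2 \<and> Cinf_open V1 \<and> Cinf_open V2 \<and>
    U1 \<noteq> {} \<and> U2 \<noteq> {} \<and> V1 \<noteq> {} \<and> V2 \<noteq> {}"
  then obtain f1 f2 g1 g2 where fg: "f1 \<in> U1" "f2 \<in> U2" "g1 \<in> V1" "g2 \<in> V2" by blast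
  then have Cinf: "f1 \<in> Cinf" "f2 \<in> Cinf" "g1 \<in> Cinf" "g2 \<in> Cinf"
    using H unfolding Cinf_open_def by blast+
  obtain K1 where K1: "\<And>h. h \<in> Cinf \<Longrightarrow> jets_agree K1 h f1 \<Longrightarrow> h \<in> U1"
    using H fg(1) Cinf_open_jets_agree by blast
  obtain K2 where K2: "\<And>h. h \<in> Cinf \<Longrightarrow> jets_agree K2 h f2 \<Longrightarrow> h \<in> U2"
    using H fg(2) Cinf_open_jets_agree by blast
  obtain L1 where L1: "\<And>h. h \<in> Cinf \<Longrightarrow> jets_agree L1 h g1 \<Longrightarrow> h \<in> V1"
    using H fg(3) Cinf_open_jets_agree by blast
  obtain L2 where L2: "\<And>h. h \<in> Cinf \<Longrightarrow> jets_agree L2 h g2 \<Longrightarrow> h \<in> V2"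
    using H fg(4) Cinf_open_jets_agree by blast
  define K where "K = max (max K1 K2) (max L1 L2)"
  obtain n :: nat where "(2 * K + 3) / \<bar>a\<bar> < real n"
    using reals_Archimedean2 by blast
  then have n: "2 * K + 3 \<le> real n * \<bar>a\<bar>"
    using assms by (simp add: field_simps)
  obtain h1 where h1: "h1 \<in> Cinf" "jets_agree K h1 f1" "jets_agree K ((transl a ^^ n) h1) g1"
    using transl_glue[OF assms Cinf(1,3) n] .
  obtain h2 where h2: "h2 \<in> Cinf" "jets_agree K h2 f2" "jets_agree K ((transl a ^^ n) h2) g2"
    using transl_glue[OF assms Cinf(2,4) n] .
  have "h1 \<in> U1" "(transl a ^^ n) h1 \<in> V1" "h2 \<in> U2" "(transl a ^^ n) h2 \<in> V2"
    using K1 K2 L1 L2 h1 h2 funpow_transl_Cinf jets_agree_mono unfolding K_def by force+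
  then show "\<exists>n. (transl a ^^ n) ` U1 \<inter> V1 \<noteq> {} \<and> (transl a ^^ n) ` U2 \<inter> V2 \<noteq> {}"
    by blast
qed

lemma nonneg_not_hypercyclic_transl:
  assumes "\<And>x. f x \<ge> 0"
  shows "\<not> hypercyclic_vector (transl a) f"
proof
  assume "hypercyclic_vector (transl a) f"
  moreover have "(\<lambda>x. -2) \<in> {g\<in>Cinf. g 0 < -1}"
    by (simp add: Cinf_iff_differentiable_upto differentiable_upto_const)
  ultimately obtain n where "(transl a ^^ n) f \<in> {g\<in>Cinf. g 0 < -1}"
    using Cinf_open_eval_0_less unfolding hypercyclic_vector_def by blast
  then show False
    using assms[of "real n * a"] by (simp add: funpow_transl)
qed

lemma not_supports_hypercyclic_algebra_transl: "\<not> supports_hypercyclic_algebra (transl a)"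
proof
  assume "supports_hypercyclic_algebra (transl a)"
  then obtain A where A: "Cinf_subalgebra A" "A \<noteq> {\<lambda>x. 0}"
    and hc: "\<And>f. f \<in> A \<Longrightarrow> f \<noteq> (\<lambda>x. 0) \<Longrightarrow> hypercyclic_vector (transl a) f"
    unfolding supports_hypercyclic_algebra_def by blast
  then obtain f y where f: "f \<in> A" "f y \<noteq> 0"
    unfolding Cinf_subalgebra_def by fastforce
  then have "(\<lambda>x. f x * f x) \<in> A"
    using A(1) unfolding Cinf_subalgebra_def by blast
  moreover have "(\<lambda>x. f x * f x) \<noteq> (\<lambda>x. 0)"
    using f(2) by (metis mult_eq_0_iff)
  ultimately show False
    using hc nonneg_not_hypercyclic_transl[of "\<lambda>x. f x * f x"] by auto
qed

theorem corollary17: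
  fixes a :: real
  assumes "a \<noteq> 0"
  shows "weakly_mixing (transl a) \<and> \<not> supports_hypercyclic_algebra (transl a)"
  using weakly_mixing_transl[OF assms] not_supports_hypercyclic_algebra_transl by blast

end
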